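(* (a) Let $\Box=(n^m)$. Then \[\sum_{(\mu,\nu)}f_\mu\, f_{\Box\setminus\nu}=(n-1)f_\Box,\] where the sum runs over all pairs of partitions $\mu,\nu$ with $[\mu]\subseteq[\nu]\subseteq[\Box]$ and $[\nu]=[\mu]\cup\{u,(i,j+1)\}$ for some cell $u=(i,j)\in[\Box]\setminus[\mu]$. (b) Let $n\ge2$. Then \[\sum_{(\mu,\nu)}g^\mu\, g^{\Delta_n\setminus\nu}=(n-2)\,g^{\Delta_n},\] where the sum runs over all pairs of strict partitions $\mu,\nu$ with $[\mu]^{\mathrm{sh}}\subseteq[\nu]^{\mathrm{sh}}\subseteq[\Delta_n]^{\mathrm{sh}}$ and $[\nu]^{\mathrm{sh}}=[\mu]^{\mathrm{sh}}\cup\{u,(i,j+1)\}$ for some cell $u=(i,j)\in[\Delta_n]^{\mathrm{sh}}\setminus[\mu]^{\mathrm{sh}}$.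
   Context: Matrix coordinates. $[\lambda]=\{(i,j):i\in[\ell(\lambda)],j\in[\lambda_i]\}$; for strict $\lambda$, $[\lambda]^{\mathrm{sh}}=\{(i,j+i-1):i\in[\ell(\lambda)],j\in[\lambda_i]\}$. $f_\lambda$ is the number of standard Young tableaux of shape $\lambda$ and $g^\lambda$ the number of shifted standard Young tableaux of shape $[\lambda]^{\mathrm{sh}}$ (bijections onto $[|\lambda|]$ increasing along rows and columns); $f_\emptyset=g^\emptyset=1$. For $\Box=(n^m)$ and $[\nu]\subseteq[\Box]$, $\Box\setminus\nu$ is the partition with diagram $\{(m-i+1,n-j+1):(i,j)\in[\Box]\setminus[\nu]\}$. $\Delta_n=(n-1,\dots,1)$, and for strict $\nu$ with $[\nu]^{\mathrm{sh}}\subseteq[\Delta_n]^{\mathrm{sh}}$, $\Delta_n\setminus\nu$ is the strict partition with shifted diagram $\{(n-j,n-i):(i,j)\in[\Delta_n]^{\mathrm{sh}}\setminus[\nu]^{\mathrm{sh}}\}$. *)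

theory Defs
  imports Main
begin

text \<open>Partitions are lists of positive integers in weakly decreasing order;
  strict partitions are strictly decreasing.  Cells use 1-based matrix coordinates.\<close>

definition is_partition :: "nat list \<Rightarrow> bool" where
  "is_partition la \<longleftrightarrow> sorted_wrt (\<ge>) la \<and> (\<forall>x\<in>set la. 0 < x)"

definition is_strict_partition :: "nat list \<Rightarrow> bool" where
  "is_strict_partition la \<longleftrightarrow> sorted_wrt (>) la \<and> (\<forall>x\<in>set la. 0 < x)"

definition size_part :: "nat list \<Rightarrow> nat" where
  "size_part la = sum_list la"

definition diagram :: "nat list \<Rightarrow> (nat \<times> nat) set" where
  "diagram la = {(i, j). 1 \<le> i \<and> i \<le> length la \<and> 1 \<le> j \<and> j \<le> la ! (i - 1)}"

definition shifted_diagram :: "nat list \<Rightarrow> (nat \<times> nat) set" where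
  "shifted_diagram la = {(i, j + i - 1) | i j. 1 \<le> i \<and> i \<le> length la \<and> 1 \<le> j \<and> j \<le> la ! (i - 1)}"

text \<open>Number of standard fillings of a finite cell set D: bijections onto {1..|D|}
  increasing along rows and columns (the values off D are fixed to 0 so that
  distinct fillings correspond to distinct functions).\<close>
definition num_std :: "(nat \<times> nat) set \<Rightarrow> nat" where
  "num_std D = card {T :: nat \<times> nat \<Rightarrow> nat.
      bij_betw T D {1..card D} \<and> (\<forall>x. x \<notin> D \<longrightarrow> T x = 0) \<and>
      (\<forall>i j j'. (i, j) \<in> D \<and> (i, j') \<in> D \<and> j < j' \<longrightarrow> T (i, j) < T (i, j')) \<and>
      (\<forall>i i' j. (i, j) \<in> D \<and> (i', j) \<in> D \<and> i < i' \<longrightarrow> T (i, j) < T (i', j))}"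

definition f_syt :: "nat list \<Rightarrow> nat" where
  "f_syt la = num_std (diagram la)"

definition g_syt :: "nat list \<Rightarrow> nat" where
  "g_syt la = num_std (shifted_diagram la)"

definition rect :: "nat \<Rightarrow> nat \<Rightarrow> nat list" where
  "rect m n = replicate m n"

definition staircase :: "nat \<Rightarrow> nat list" where
  "staircase n = rev [1..<n]"

definition rect_compl :: "nat \<Rightarrow> nat \<Rightarrow> nat list \<Rightarrow> nat list" where
  "rect_compl m n nu = (THE la. is_partition la \<and>
      diagram la = (\<lambda>(i, j). (m - i + 1, n - j + 1)) ` (diagram (rect m n) - diagram nu))"

definition stair_compl :: "nat \<Rightarrow> nat list \<Rightarrow> nat list" where
  "stair_compl n nu = (THE la. is_strict_partition la \<and>
      shifted_diagram la = (\<lambda>(i, j). (n - j, n - i)) ` (shifted_diagram (staircase n) - shifted_diagram nu))"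

definition pairs_rect :: "nat \<Rightarrow> nat \<Rightarrow> (nat list \<times> nat list) set" where
  "pairs_rect m n = {(mu, nu). is_partition mu \<and> is_partition nu \<and>
      diagram mu \<subseteq> diagram nu \<and> diagram nu \<subseteq> diagram (rect m n) \<and>
      (\<exists>i j. (i, j) \<in> diagram (rect m n) - diagram mu \<and>
             diagram nu = diagram mu \<union> {(i, j), (i, j + 1)})}"

definition pairs_stair :: "nat \<Rightarrow> (nat list \<times> nat list) set" where
  "pairs_stair n = {(mu, nu). is_strict_partition mu \<and> is_strict_partition nu \<and>
      shifted_diagram mu \<subseteq> shifted_diagram nu \<and>
      shifted_diagram nu \<subseteq> shifted_diagram (staircase n) \<and>
      (\<exists>i j. (i, j) \<in> shifted_diagram (staircase n) - shifted_diagram mu \<and>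
             shifted_diagram nu = shifted_diagram mu \<union> {(i, j), (i, j + 1)})}"

end

theory Submission
  imports Defs "HOL-Library.Disjoint_Sets" "HOL-Library.Product_Order"
begin

text \<open>
  Both identities count the same set in two ways.  For a finite set of cells D whose rows and
  columns are intervals, consider the pairs (T, a) of a standard filling T of D and an entry a
  such that a + 1 lies immediately to the right of a.  Summing, over all a, the column of a + 1
  minus the column of a telescopes to the column of the largest entry minus the column of 1;
  the pairs where a and a + 1 are neither horizontally nor vertically adjacent cancel, since
  swapping a and a + 1 is then again a standard filling.  Hence the pairs number
  (n - 1) f_Box, resp. (n - 2) g^Delta_n.
  On the other hand, the cells of the entries below a form an order ideal mu and those of the
  entries up to a + 1 an order ideal nu, which is mu plus a horizontal domino.  For fixed
  (mu, nu) such fillings factor into a standard filling of mu and a reversed standard filling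
  of the rest, which the point reflection of the rectangle (resp. the anti-diagonal reflection
  of the staircase) turns into a standard filling of Box \ nu (resp. Delta_n \ nu).
\<close>

section \<open>Standard fillings of a set of cells\<close>

text \<open>x is strictly left of y in a row or strictly above y in a column.  The relation is not
  transitive; standard fillings are the injective labellings increasing along it.\<close>
definition line_less :: "nat \<times> nat \<Rightarrow> nat \<times> nat \<Rightarrow> bool" where
  "line_less x y \<longleftrightarrow> (fst x = fst y \<and> snd x < snd y) \<or> (snd x = snd y \<and> fst x < fst y)"

definition std_fillings :: "(nat \<times> nat) set \<Rightarrow> (nat \<times> nat \<Rightarrow> nat) set" where
  "std_fillings D = {T. inj_on T D \<and> T ` D \<subseteq> {1..card D} \<and> (\<forall>x. x \<notin> D \<longrightarrow> T x = 0) \<and>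
     (\<forall>x\<in>D. \<forall>y\<in>D. line_less x y \<longrightarrow> T x < T y)}"

lemma std_fillings_less: "T \<in> std_fillings D \<Longrightarrow> x \<in> D \<Longrightarrow> y \<in> D \<Longrightarrow> line_less x y \<Longrightarrow> T x < T y"
  by (auto simp: std_fillings_def)

lemma std_fillings_range: "T \<in> std_fillings D \<Longrightarrow> x \<in> D \<Longrightarrow> 1 \<le> T x \<and> T x \<le> card D"
  by (auto simp: std_fillings_def)

lemma std_fillings_outside: "T \<in> std_fillings D \<Longrightarrow> x \<notin> D \<Longrightarrow> T x = 0"
  unfolding std_fillings_def by blast

lemma std_fillings_inj: "T \<in> std_fillings D \<Longrightarrow> x \<in> D \<Longrightarrow> y \<in> D \<Longrightarrow> T x = T y \<Longrightarrow> x = y"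
  by (auto simp: std_fillings_def inj_on_def)

lemma std_fillings_image:
  assumes "finite D" "T \<in> std_fillings D" shows "T ` D = {1..card D}"
  using assms by (intro card_subset_eq) (auto simp: card_image std_fillings_def)

lemma num_std_eq_card_std_fillings:
  assumes "finite D" shows "num_std D = card (std_fillings D)"
proof -
  have bij: "bij_betw T D {1..card D} \<longleftrightarrow> inj_on T D \<and> T ` D \<subseteq> {1..card D}" for T
  proof
    assume "inj_on T D \<and> T ` D \<subseteq> {1..card D}"
    moreover from this have "T ` D = {1..card D}"
      by (intro card_subset_eq) (auto simp: card_image)
    ultimately show "bij_betw T D {1..card D}" by (simp add: bij_betw_def)
  qed (simp add: bij_betw_def)
  have less: "(\<forall>x\<in>D. \<forall>y\<in>D. line_less x y \<longrightarrow> T x < T y) \<longleftrightarrow>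
      (\<forall>i j j'. (i, j) \<in> D \<and> (i, j') \<in> D \<and> j < j' \<longrightarrow> T (i, j) < T (i, j')) \<and>
      (\<forall>i i' j. (i, j) \<in> D \<and> (i', j) \<in> D \<and> i < i' \<longrightarrow> T (i, j) < T (i', j))" for T
    by (auto simp: line_less_def)
  show ?thesis
    unfolding num_std_def std_fillings_def
    by (intro arg_cong[where f = card] Collect_cong) (simp only: bij less conj_assoc)
qed

lemma finite_std_fillings:
  assumes "finite D" shows "finite (std_fillings D)"
proof -
  have "std_fillings D \<subseteq> {f. \<forall>x. (x \<in> D \<longrightarrow> f x \<in> {1..card D}) \<and> (x \<notin> D \<longrightarrow> f x = 0)}"
    by (auto simp: std_fillings_def)
  then show ?thesis
    using finite_set_of_finite_funs[of D "{1..card D}" 0] assms by (meson finite_atLeastAtMost finite_subset)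
qed

definition entry_cell :: "(nat \<times> nat) set \<Rightarrow> (nat \<times> nat \<Rightarrow> nat) \<Rightarrow> nat \<Rightarrow> nat \<times> nat" where
  "entry_cell D T v = inv_into D T v"

lemma entry_cell:
  assumes "finite D" "T \<in> std_fillings D" "1 \<le> v" "v \<le> card D"
  shows "entry_cell D T v \<in> D" "T (entry_cell D T v) = v"
proof -
  have "v \<in> T ` D" using std_fillings_image[OF assms(1,2)] assms(3,4) by auto
  then show "entry_cell D T v \<in> D" "T (entry_cell D T v) = v"
    by (auto simp: entry_cell_def inv_into_into f_inv_into_f)
qed

lemma entry_cell_eq:
  assumes "T \<in> std_fillings D" "x \<in> D" shows "entry_cell D T (T x) = x"
  using assms by (auto simp: entry_cell_def std_fillings_def inv_into_f_f)

lemma entry_cell_one_minimal: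
  assumes "finite D" "D \<noteq> {}" "T \<in> std_fillings D" "y \<in> D"
  shows "\<not> line_less y (entry_cell D T 1)"
proof
  have "1 \<le> card D" using assms(1,2) by (simp add: Suc_le_eq card_gt_0_iff)
  then have x: "entry_cell D T 1 \<in> D" "T (entry_cell D T 1) = 1" using entry_cell[OF assms(1,3)] by auto
  assume "line_less y (entry_cell D T 1)"
  then have "T y < 1" using std_fillings_less[OF assms(3,4) x(1)] x(2) by simp
  then show False using std_fillings_range[OF assms(3,4)] by simp
qed

lemma entry_cell_card_maximal:
  assumes "finite D" "D \<noteq> {}" "T \<in> std_fillings D" "y \<in> D"
  shows "\<not> line_less (entry_cell D T (card D)) y"
proof
  have "1 \<le> card D" using assms(1,2) by (simp add: Suc_le_eq card_gt_0_iff)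
  then have x: "entry_cell D T (card D) \<in> D" "T (entry_cell D T (card D)) = card D"
    using entry_cell[OF assms(1,3)] by auto
  assume "line_less (entry_cell D T (card D)) y"
  then have "card D < T y" using std_fillings_less[OF assms(3) x(1) assms(4)] x(2) by simp
  then show False using std_fillings_range[OF assms(3,4)] by simp
qed

section \<open>Horizontal dominoes in standard fillings\<close>

definition right_of :: "nat \<times> nat \<Rightarrow> nat \<times> nat" where
  "right_of x = (fst x, Suc (snd x))"

definition below_of :: "nat \<times> nat \<Rightarrow> nat \<times> nat" where
  "below_of x = (Suc (fst x), snd x)"

definition hdominoes :: "(nat \<times> nat) set \<Rightarrow> ((nat \<times> nat \<Rightarrow> nat) \<times> nat) set" where
  "hdominoes D = {(T, a). T \<in> std_fillings D \<and> 1 \<le> a \<and> a < card D \<and>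
     entry_cell D T (Suc a) = right_of (entry_cell D T a)}"

definition vdominoes :: "(nat \<times> nat) set \<Rightarrow> ((nat \<times> nat \<Rightarrow> nat) \<times> nat) set" where
  "vdominoes D = {(T, a). T \<in> std_fillings D \<and> 1 \<le> a \<and> a < card D \<and>
     entry_cell D T (Suc a) = below_of (entry_cell D T a)}"

definition swap_entries :: "nat \<Rightarrow> (nat \<times> nat \<Rightarrow> nat) \<Rightarrow> (nat \<times> nat \<Rightarrow> nat)" where
  "swap_entries a T = (\<lambda>x. if T x = a then Suc a else if T x = Suc a then a else T x)"

definition col_step :: "(nat \<times> nat) set \<Rightarrow> (nat \<times> nat \<Rightarrow> nat) \<Rightarrow> nat \<Rightarrow> int" where
  "col_step D T a = int (snd (entry_cell D T (Suc a))) - int (snd (entry_cell D T a))"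

lemma swap_entries_swap_entries [simp]: "swap_entries a (swap_entries a T) = T"
  by (auto simp: swap_entries_def fun_eq_iff)

lemma hdominoes_subset: "hdominoes D \<subseteq> std_fillings D \<times> {1..<card D}"
  by (auto simp: hdominoes_def)

lemma vdominoes_subset: "vdominoes D \<subseteq> std_fillings D \<times> {1..<card D}"
  by (auto simp: vdominoes_def)

lemma hdominoes_vdominoes_disjoint: "hdominoes D \<inter> vdominoes D = {}"
  by (auto simp: hdominoes_def vdominoes_def right_of_def below_of_def)

locale line_convex_cells =
  fixes D :: "(nat \<times> nat) set"
  assumes finite_cells: "finite D"
    and row_interval: "\<And>i j j' j''.
      (i, j) \<in> D \<Longrightarrow> (i, j') \<in> D \<Longrightarrow> j \<le> j'' \<Longrightarrow> j'' \<le> j' \<Longrightarrow> (i, j'') \<in> D"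
    and col_interval: "\<And>i i' i'' j.
      (i, j) \<in> D \<Longrightarrow> (i', j) \<in> D \<Longrightarrow> i \<le> i'' \<Longrightarrow> i'' \<le> i' \<Longrightarrow> (i'', j) \<in> D"
begin

lemma line_less_entries_adjacent:
  assumes T: "T \<in> std_fillings D" and a: "1 \<le> a" "a < card D"
    and less: "line_less (entry_cell D T a) (entry_cell D T (Suc a))"
  shows "entry_cell D T (Suc a) = right_of (entry_cell D T a) \<or>
         entry_cell D T (Suc a) = below_of (entry_cell D T a)"
proof (rule ccontr)
  define x y where "x = entry_cell D T a" and "y = entry_cell D T (Suc a)"
  have x: "x \<in> D" "T x = a" and y: "y \<in> D" "T y = Suc a"
    using entry_cell[OF finite_cells T] a by (auto simp: x_def y_def)
  assume "\<not> ?thesis"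
  then have not_adj: "y \<noteq> right_of x" "y \<noteq> below_of x" by (auto simp: x_def y_def)
  txt \<open>The neighbour of x towards y lies in D by convexity and strictly between x and y.\<close>
  obtain z where "z \<in> D" "line_less x z" "line_less z y"
  proof (cases "fst x = fst y")
    case True
    with less have "snd x < snd y" by (simp add: line_less_def x_def y_def)
    moreover have "snd y \<noteq> Suc (snd x)"
      using not_adj(1) True by (cases y) (simp add: right_of_def)
    ultimately have "Suc (snd x) < snd y" by simp
    then show ?thesis
      using that[of "right_of x"] row_interval[of "fst x" "snd x" "snd y" "Suc (snd x)"] x y True
      by (cases x, cases y) (auto simp: line_less_def right_of_def)
  next
    case False
    with less have "snd x = snd y" "fst x < fst y" by (simp_all add: line_less_def x_def y_def)
    moreover have "fst y \<noteq> Suc (fst x)"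
      using not_adj(2) \<open>snd x = snd y\<close> by (cases y) (simp add: below_of_def)
    ultimately have "snd x = snd y" "Suc (fst x) < fst y" by simp_all
    then show ?thesis
      using that[of "below_of x"] col_interval[of "fst x" "snd x" "fst y" "Suc (fst x)"] x y
      by (cases x, cases y) (auto simp: line_less_def below_of_def)
  qed
  then have "T x < T z" "T z < T y" using std_fillings_less[OF T] x y by blast+
  then show False using x y by simp
qed

lemma swap_entries_std_fillings:
  assumes T: "T \<in> std_fillings D" and a: "1 \<le> a" "a < card D"
    and "(T, a) \<notin> hdominoes D" "(T, a) \<notin> vdominoes D"
  shows "swap_entries a T \<in> std_fillings D"
proof -
  have not_less: "\<not> line_less (entry_cell D T a) (entry_cell D T (Suc a))"
    using line_less_entries_adjacent[OF T a] assms(4,5) T a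
    by (auto simp: hdominoes_def vdominoes_def)
  have "swap_entries a T x < swap_entries a T y"
    if x: "x \<in> D" and y: "y \<in> D" and xy: "line_less x y" for x y
  proof -
    have "\<not> (T x = a \<and> T y = Suc a)"
    proof
      assume "T x = a \<and> T y = Suc a"
      then have "entry_cell D T a = x" "entry_cell D T (Suc a) = y"
        using entry_cell_eq[OF T x] entry_cell_eq[OF T y] by auto
      with not_less xy show False by simp
    qed
    then show ?thesis using std_fillings_less[OF T x y xy] by (auto simp: swap_entries_def)
  qed
  moreover have "inj_on (swap_entries a T) D"
    using std_fillings_inj[OF T] by (auto simp: inj_on_def swap_entries_def split: if_splits)
  moreover have "swap_entries a T ` D \<subseteq> {1..card D}"
    using std_fillings_range[OF T] a by (auto simp: swap_entries_def)
  moreover have "\<forall>x. x \<notin> D \<longrightarrow> swap_entries a T x = 0"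
    using std_fillings_outside[OF T] a by (auto simp: swap_entries_def)
  ultimately show ?thesis by (simp add: std_fillings_def)
qed

lemma entry_cell_swap_entries:
  assumes T: "T \<in> std_fillings D" and a: "1 \<le> a" "a < card D"
    and S: "swap_entries a T \<in> std_fillings D"
  shows "entry_cell D (swap_entries a T) a = entry_cell D T (Suc a)"
    "entry_cell D (swap_entries a T) (Suc a) = entry_cell D T a"
proof -
  have x: "entry_cell D T a \<in> D" "T (entry_cell D T a) = a"
    and y: "entry_cell D T (Suc a) \<in> D" "T (entry_cell D T (Suc a)) = Suc a"
    using entry_cell[OF finite_cells T] a by auto
  show "entry_cell D (swap_entries a T) a = entry_cell D T (Suc a)"
    using entry_cell_eq[OF S y(1)] y by (simp add: swap_entries_def)
  show "entry_cell D (swap_entries a T) (Suc a) = entry_cell D T a"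
    using entry_cell_eq[OF S x(1)] x by (simp add: swap_entries_def)
qed

lemma swap_entries_non_domino:
  assumes "(T, a) \<in> std_fillings D \<times> {1..<card D} - hdominoes D - vdominoes D"
  shows "(swap_entries a T, a) \<in> std_fillings D \<times> {1..<card D} - hdominoes D - vdominoes D"
    and "col_step D (swap_entries a T) a = - col_step D T a"
    and "swap_entries a T \<noteq> T"
proof -
  have T: "T \<in> std_fillings D" and a: "1 \<le> a" "a < card D"
    and not_dom: "(T, a) \<notin> hdominoes D" "(T, a) \<notin> vdominoes D"
    using assms by auto
  have S: "swap_entries a T \<in> std_fillings D"
    by (rule swap_entries_std_fillings[OF T a not_dom])
  note swapped = entry_cell_swap_entries[OF T a S]
  have x: "entry_cell D T a \<in> D" "T (entry_cell D T a) = a"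
    and y: "entry_cell D T (Suc a) \<in> D" "T (entry_cell D T (Suc a)) = Suc a"
    using entry_cell[OF finite_cells T] a by auto
  have not_back: "\<not> line_less (entry_cell D T (Suc a)) (entry_cell D T a)"
    using std_fillings_less[OF T y(1) x(1)] x y by auto
  have "(swap_entries a T, a) \<notin> hdominoes D"
  proof
    assume "(swap_entries a T, a) \<in> hdominoes D"
    then have "entry_cell D T a = right_of (entry_cell D T (Suc a))"
      using swapped by (simp add: hdominoes_def)
    with not_back show False by (simp add: line_less_def right_of_def)
  qed
  moreover have "(swap_entries a T, a) \<notin> vdominoes D"
  proof
    assume "(swap_entries a T, a) \<in> vdominoes D"
    then have "entry_cell D T a = below_of (entry_cell D T (Suc a))"
      using swapped by (simp add: vdominoes_def)
    with not_back show False by (simp add: line_less_def below_of_def)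
  qed
  ultimately show "(swap_entries a T, a) \<in> std_fillings D \<times> {1..<card D} - hdominoes D - vdominoes D"
    using S a by simp
  show "col_step D (swap_entries a T) a = - col_step D T a"
    using swapped by (simp add: col_step_def)
  show "swap_entries a T \<noteq> T"
    using swapped x y by auto
qed

lemma sum_col_step_non_dominoes:
  "(\<Sum>(T, a) \<in> std_fillings D \<times> {1..<card D} - hdominoes D - vdominoes D. col_step D T a) = 0"
  (is "(\<Sum>(T, a) \<in> ?X. _) = 0")
proof (rule sum_involution_eq_0[where h = "\<lambda>(T, a). (swap_entries a T, a)"])
  have "(swap_entries a T, a) \<in> ?X \<and> col_step D (swap_entries a T) a + col_step D T a = 0 \<and>
      swap_entries a T \<noteq> T" if "(T, a) \<in> ?X" for T a
    using swap_entries_non_domino[OF that] by simp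
  then show "p \<in> ?X \<Longrightarrow> (\<lambda>(T, a). (swap_entries a T, a)) p \<in> ?X"
    and "p \<in> ?X \<Longrightarrow> (case (\<lambda>(T, a). (swap_entries a T, a)) p of (T, a) \<Rightarrow> col_step D T a) +
      (case p of (T, a) \<Rightarrow> col_step D T a) = 0"
    and "p \<in> ?X \<Longrightarrow> (\<lambda>(T, a). (swap_entries a T, a)) p \<noteq> p" for p
    by (cases p; simp)+
qed auto

theorem card_hdominoes_telescope:
  assumes "D \<noteq> {}"
  shows "int (card (hdominoes D)) =
    (\<Sum>T \<in> std_fillings D. int (snd (entry_cell D T (card D))) - int (snd (entry_cell D T 1)))"
proof -
  define P where "P = std_fillings D \<times> {1..<card D}"
  define step where "step p = col_step D (fst p) (snd p)" for p
  have N: "1 \<le> card D" using assms finite_cells by (simp add: Suc_le_eq card_gt_0_iff)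
  have finP: "finite P" using finite_std_fillings[OF finite_cells] by (simp add: P_def)
  have "(\<Sum>T \<in> std_fillings D. int (snd (entry_cell D T (card D))) - int (snd (entry_cell D T 1)))
      = (\<Sum>T \<in> std_fillings D. \<Sum>a \<in> {1..<card D}. col_step D T a)"
  proof (rule sum.cong[OF refl])
    fix T
    have "(\<Sum>a \<in> {1..<card D}. col_step D T a) = (\<Sum>a = 1..card D - 1. col_step D T a)"
      using N by (intro sum.cong) auto
    also have "\<dots> = int (snd (entry_cell D T (Suc (card D - 1)))) - int (snd (entry_cell D T 1))"
      unfolding col_step_def by (rule sum_Suc_diff) simp
    finally show "int (snd (entry_cell D T (card D))) - int (snd (entry_cell D T 1)) =
        (\<Sum>a \<in> {1..<card D}. col_step D T a)" using N by simp
  qed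
  also have "\<dots> = sum step P"
    by (simp add: P_def step_def sum.cartesian_product case_prod_beta')
  also have "\<dots> = sum step (hdominoes D) + sum step (vdominoes D) + sum step (P - hdominoes D - vdominoes D)"
  proof -
    have "hdominoes D \<subseteq> P" "vdominoes D \<subseteq> P"
      using hdominoes_subset vdominoes_subset by (auto simp: P_def)
    moreover from this have "finite (hdominoes D)" "finite (vdominoes D)"
      using finP by (auto intro: finite_subset)
    ultimately have "sum step P = sum step (hdominoes D \<union> vdominoes D) +
        sum step (P - (hdominoes D \<union> vdominoes D))"
      using finP by (subst sum.subset_diff[of "hdominoes D \<union> vdominoes D"]) auto
    then show ?thesis
      using hdominoes_vdominoes_disjoint[of D] \<open>finite (hdominoes D)\<close> \<open>finite (vdominoes D)\<close>
      by (simp add: sum.union_disjoint set_diff_eq)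
  qed
  also have "sum step (hdominoes D) = (\<Sum>_ \<in> hdominoes D. 1)"
    by (rule sum.cong) (auto simp: step_def col_step_def hdominoes_def right_of_def)
  also have "sum step (vdominoes D) = 0"
    by (rule sum.neutral) (auto simp: step_def col_step_def vdominoes_def below_of_def)
  also have "sum step (P - hdominoes D - vdominoes D) = 0"
    using sum_col_step_non_dominoes by (simp add: P_def step_def case_prod_beta')
  finally show ?thesis by simp
qed

corollary card_hdominoes:
  assumes "D \<noteq> {}" and "c \<le> c'"
    and first: "\<And>x. x \<in> D \<Longrightarrow> \<forall>y\<in>D. \<not> line_less y x \<Longrightarrow> snd x = c"
    and last: "\<And>x. x \<in> D \<Longrightarrow> \<forall>y\<in>D. \<not> line_less x y \<Longrightarrow> snd x = c'"
  shows "card (hdominoes D) = card (std_fillings D) * (c' - c)"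
proof -
  have N: "1 \<le> card D" using assms(1) finite_cells by (simp add: Suc_le_eq card_gt_0_iff)
  have "int (snd (entry_cell D T (card D))) - int (snd (entry_cell D T 1)) = int (c' - c)"
    if T: "T \<in> std_fillings D" for T
  proof -
    have "snd (entry_cell D T 1) = c"
      using first entry_cell(1)[OF finite_cells T] entry_cell_one_minimal[OF finite_cells assms(1) T] N by simp
    moreover have "snd (entry_cell D T (card D)) = c'"
      using last entry_cell(1)[OF finite_cells T] entry_cell_card_maximal[OF finite_cells assms(1) T] N by simp
    ultimately show ?thesis using \<open>c \<le> c'\<close> by simp
  qed
  then have "int (card (hdominoes D)) = int (card (std_fillings D) * (c' - c))"
    using card_hdominoes_telescope[OF assms(1)] by simp
  then show ?thesis by (simp only: of_nat_eq_iff)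
qed

end

section \<open>Splitting a standard filling at a domino\<close>

text \<open>C is a copy of D - B under a bijection \<rho> that reverses line_less, so the entries of a filling
  above B, read backwards (v \<mapsto> card D + 1 - v) and transported along \<rho>, form a standard filling
  of C.\<close>
locale domino_split =
  fixes D A B C :: "(nat \<times> nat) set" and u u' :: "nat \<times> nat" and \<rho> :: "nat \<times> nat \<Rightarrow> nat \<times> nat"
  assumes finite_cells: "finite D" and A_subset_B: "A \<subseteq> B" and B_subset_D: "B \<subseteq> D"
    and domino: "B - A = {u, u'}" and u_less_u': "line_less u u'"
    and A_closed: "\<And>x y. x \<in> A \<Longrightarrow> y \<in> D \<Longrightarrow> line_less y x \<Longrightarrow> y \<in> A"
    and B_closed: "\<And>x y. x \<in> B \<Longrightarrow> y \<in> D \<Longrightarrow> line_less y x \<Longrightarrow> y \<in> B"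
    and \<rho>_inj: "inj_on \<rho> (D - B)" and \<rho>_image: "\<rho> ` (D - B) = C"
    and \<rho>_reverses: "\<And>x y. x \<in> D - B \<Longrightarrow> y \<in> D - B \<Longrightarrow> line_less x y \<longleftrightarrow> line_less (\<rho> y) (\<rho> x)"
begin

definition split_fillings :: "(nat \<times> nat \<Rightarrow> nat) set" where
  "split_fillings = {T \<in> std_fillings D.
     {x \<in> D. T x \<le> card A} = A \<and> {x \<in> D. T x \<le> Suc (Suc (card A))} = B}"

definition glue :: "(nat \<times> nat \<Rightarrow> nat) \<Rightarrow> (nat \<times> nat \<Rightarrow> nat) \<Rightarrow> nat \<times> nat \<Rightarrow> nat" where
  "glue S R x = (if x \<in> A then S x else if x = u then Suc (card A) else if x = u' then Suc (Suc (card A))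
     else if x \<in> D then Suc (card D) - R (\<rho> x) else 0)"

definition lower_part :: "(nat \<times> nat \<Rightarrow> nat) \<Rightarrow> nat \<times> nat \<Rightarrow> nat" where
  "lower_part T x = (if x \<in> A then T x else 0)"

definition upper_part :: "(nat \<times> nat \<Rightarrow> nat) \<Rightarrow> nat \<times> nat \<Rightarrow> nat" where
  "upper_part T y = (if y \<in> C then Suc (card D) - T (inv_into (D - B) \<rho> y) else 0)"

lemma A_subset_D: "A \<subseteq> D"
  using A_subset_B B_subset_D by blast

lemma domino_cells: "u \<in> B" "u \<notin> A" "u' \<in> B" "u' \<notin> A" "u \<noteq> u'"
  using domino u_less_u' by (auto simp: line_less_def)

lemma cells_cases:
  assumes "x \<in> D"
  obtains "x \<in> A" | "x = u" | "x = u'" | "x \<in> D - B"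
  using assms domino by blast

lemma card_B: "card B = Suc (Suc (card A))"
proof -
  have "B = A \<union> {u, u'}" using domino A_subset_B by auto
  moreover have "finite A" using finite_cells A_subset_D finite_subset by blast
  ultimately show ?thesis using domino_cells by (simp add: card_insert_if)
qed

lemma card_B_le: "Suc (Suc (card A)) \<le> card D"
  using card_mono[OF finite_cells B_subset_D] card_B by simp

lemma card_C: "card C = card D - Suc (Suc (card A))"
proof -
  have "card C = card (D - B)" using card_image[OF \<rho>_inj] \<rho>_image by simp
  also have "\<dots> = card D - Suc (Suc (card A))"
    using finite_cells B_subset_D card_B by (simp add: card_Diff_subset finite_subset)
  finally show ?thesis .
qed

lemma \<rho>_inv_into:
  assumes "y \<in> C" shows "inv_into (D - B) \<rho> y \<in> D - B" "\<rho> (inv_into (D - B) \<rho> y) = y"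
  using assms \<rho>_image inv_into_into[of y \<rho> "D - B"] f_inv_into_f[of y \<rho> "D - B"] by auto

lemma levels_from_values:
  assumes A_vals: "\<And>x. x \<in> A \<Longrightarrow> T x \<le> card A"
    and u_vals: "T u = Suc (card A)" "T u' = Suc (Suc (card A))"
    and upper_vals: "\<And>x. x \<in> D - B \<Longrightarrow> Suc (Suc (card A)) < T x"
    and x: "x \<in> D"
  shows "(T x \<le> card A \<longleftrightarrow> x \<in> A) \<and> (T x \<le> Suc (Suc (card A)) \<longleftrightarrow> x \<in> B)"
  using x
proof (cases rule: cells_cases)
  case 1 then show ?thesis using A_vals[OF 1] A_subset_B by auto
next
  case 4 then show ?thesis using upper_vals[OF 4] A_subset_B by auto
qed (use u_vals domino_cells in auto)

context
  fixes S R assumes S: "S \<in> std_fillings A" and R: "R \<in> std_fillings C"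
begin

lemma glue_values:
  shows glue_lower: "x \<in> A \<Longrightarrow> 1 \<le> glue S R x \<and> glue S R x \<le> card A"
    and glue_domino: "glue S R u = Suc (card A)" "glue S R u' = Suc (Suc (card A))"
    and glue_upper: "x \<in> D - B \<Longrightarrow>
      Suc (Suc (card A)) < glue S R x \<and> glue S R x \<le> card D \<and> glue S R x = Suc (card D) - R (\<rho> x)"
proof -
  show "x \<in> A \<Longrightarrow> 1 \<le> glue S R x \<and> glue S R x \<le> card A"
    using std_fillings_range[OF S] by (simp add: glue_def)
  show "glue S R u = Suc (card A)" "glue S R u' = Suc (Suc (card A))"
    using domino_cells by (auto simp: glue_def)
  assume x: "x \<in> D - B"
  then have "\<rho> x \<in> C" using \<rho>_image by auto
  then have "1 \<le> R (\<rho> x)" "R (\<rho> x) \<le> card D - Suc (Suc (card A))"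
    using std_fillings_range[OF R] card_C by auto
  moreover have "x \<notin> A" "x \<noteq> u" "x \<noteq> u'" using x A_subset_B domino_cells by auto
  ultimately show "Suc (Suc (card A)) < glue S R x \<and> glue S R x \<le> card D \<and>
      glue S R x = Suc (card D) - R (\<rho> x)"
    using x card_B_le by (simp add: glue_def; linarith)
qed

lemma glue_less:
  assumes x: "x \<in> D" and y: "y \<in> D" and xy: "line_less x y"
  shows "glue S R x < glue S R y"
  using y
proof (cases rule: cells_cases)
  case 1
  then have "x \<in> A" using A_closed[OF _ x xy] by simp
  then show ?thesis using 1 std_fillings_less[OF S _ _ xy] by (simp add: glue_def)
next
  case 2
  have "x \<in> B" using B_closed[OF _ x xy] domino_cells 2 by simp
  moreover have "x \<noteq> u" "x \<noteq> u'" using xy 2 u_less_u' by (auto simp: line_less_def)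
  ultimately have "x \<in> A" using domino by blast
  then show ?thesis using 2 glue_lower[of x] glue_domino by simp
next
  case 3
  have "x \<in> B" using B_closed[OF _ x xy] domino_cells 3 by simp
  moreover have "x \<noteq> u'" using xy 3 by (auto simp: line_less_def)
  ultimately have "x \<in> A \<or> x = u" using domino by blast
  then show ?thesis
  proof
    assume "x \<in> A"
    then show ?thesis using 3 glue_lower[of x] glue_domino by simp
  qed (use 3 glue_domino in simp)
next
  case 4
  have upper_y: "Suc (Suc (card A)) < glue S R y" using glue_upper[OF 4] by simp
  show ?thesis using x
  proof (cases rule: cells_cases)
    case 1 then show ?thesis using glue_lower[OF 1] upper_y by simp
  next
    case 2 then show ?thesis using glue_domino upper_y by simp
  next
    case 3 then show ?thesis using glue_domino upper_y by simp
  next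
    case x_upper: 4
    have "line_less (\<rho> y) (\<rho> x)" using \<rho>_reverses[OF x_upper 4] xy by simp
    moreover have "\<rho> x \<in> C" "\<rho> y \<in> C" using 4 x_upper \<rho>_image by auto
    ultimately have "R (\<rho> y) < R (\<rho> x)" using std_fillings_less[OF R] by blast
    moreover have "R (\<rho> x) \<le> card D" using std_fillings_range[OF R \<open>\<rho> x \<in> C\<close>] card_C by linarith
    ultimately show ?thesis using glue_upper[OF 4] glue_upper[OF x_upper] by simp
  qed
qed

lemma glue_split_fillings: "glue S R \<in> split_fillings"
proof -
  have "x \<in> A \<Longrightarrow> glue S R x \<le> card A" "x \<in> D - B \<Longrightarrow> Suc (Suc (card A)) < glue S R x" for x
    using glue_lower[of x] glue_upper[of x] by simp_all
  then have levels: "glue S R x \<le> card A \<longleftrightarrow> x \<in> A"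
      "glue S R x \<le> Suc (Suc (card A)) \<longleftrightarrow> x \<in> B" if "x \<in> D" for x
    using levels_from_values[of "glue S R" x] glue_domino that by blast+
  have lower_A: "{x \<in> D. glue S R x \<le> card A} = A"
    and lower_B: "{x \<in> D. glue S R x \<le> Suc (Suc (card A))} = B"
    using levels A_subset_D B_subset_D by auto
  have "inj_on (glue S R) D"
  proof (rule inj_onI)
    fix x y assume x: "x \<in> D" and y: "y \<in> D" and eq: "glue S R x = glue S R y"
    have same_A: "x \<in> A \<longleftrightarrow> y \<in> A" using levels(1)[OF x] levels(1)[OF y] eq by simp
    have same_B: "x \<in> B \<longleftrightarrow> y \<in> B" using levels(2)[OF x] levels(2)[OF y] eq by simp
    show "x = y" using x
    proof (cases rule: cells_cases)
      case 1
      then have "S x = S y" using same_A eq by (simp add: glue_def)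
      then show ?thesis using 1 same_A std_fillings_inj[OF S] by blast
    next
      case x_upper: 4
      then have y_upper: "y \<in> D - B" using same_B y by blast
      have "\<rho> x \<in> C" "\<rho> y \<in> C" using x_upper y_upper \<rho>_image by auto
      moreover from this have "R (\<rho> x) \<le> card D" "R (\<rho> y) \<le> card D"
        using std_fillings_range[OF R] card_C by (metis diff_le_self le_trans)+
      ultimately have "R (\<rho> x) = R (\<rho> y)"
        using eq glue_upper[OF x_upper] glue_upper[OF y_upper] by simp
      then have "\<rho> x = \<rho> y" using std_fillings_inj[OF R] \<open>\<rho> x \<in> C\<close> \<open>\<rho> y \<in> C\<close> by blast
      then show ?thesis using \<rho>_inj x_upper y_upper by (meson inj_onD)
    next
      case 2
      then have "y \<in> B - A" using same_A same_B y domino_cells by blast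
      then show ?thesis using 2 eq glue_domino domino by auto
    next
      case 3
      then have "y \<in> B - A" using same_A same_B y domino_cells by blast
      then show ?thesis using 3 eq glue_domino domino by auto
    qed
  qed
  moreover have "glue S R x \<in> {1..card D}" if "x \<in> D" for x
    using that
  proof (cases rule: cells_cases)
    case 1 then show ?thesis using glue_lower[OF 1] card_B_le by simp
  next
    case 4 then show ?thesis using glue_upper[OF 4] by simp
  qed (use glue_domino card_B_le in simp_all)
  then have "glue S R ` D \<subseteq> {1..card D}" by blast
  moreover have "\<forall>x. x \<notin> D \<longrightarrow> glue S R x = 0"
    using A_subset_D B_subset_D domino_cells by (auto simp: glue_def)
  moreover have "\<forall>x\<in>D. \<forall>y\<in>D. line_less x y \<longrightarrow> glue S R x < glue S R y"
    using glue_less by blast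
  ultimately show ?thesis using lower_A lower_B by (simp add: std_fillings_def split_fillings_def)
qed

end

lemma split_fillings_values:
  assumes T: "T \<in> split_fillings"
  shows split_fillings_std: "T \<in> std_fillings D"
    and split_fillings_domino: "T u = Suc (card A)" "T u' = Suc (Suc (card A))"
    and split_fillings_lower: "\<And>x. x \<in> A \<Longrightarrow> 1 \<le> T x \<and> T x \<le> card A"
    and split_fillings_upper: "\<And>x. x \<in> D - B \<Longrightarrow> Suc (Suc (card A)) < T x \<and> T x \<le> card D"
proof -
  show std: "T \<in> std_fillings D" using T by (simp add: split_fillings_def)
  have lower_A: "x \<in> D \<Longrightarrow> T x \<le> card A \<longleftrightarrow> x \<in> A"
    and lower_B: "x \<in> D \<Longrightarrow> T x \<le> Suc (Suc (card A)) \<longleftrightarrow> x \<in> B" for x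
    using T by (auto simp: split_fillings_def)
  have u: "u \<in> D" "u' \<in> D" using domino_cells B_subset_D by auto
  have "T u < T u'" using std_fillings_less[OF std u u_less_u'] .
  then show "T u = Suc (card A)" "T u' = Suc (Suc (card A))"
    using lower_A[OF u(1)] lower_A[OF u(2)] lower_B[OF u(1)] lower_B[OF u(2)] domino_cells by simp_all
  show "x \<in> A \<Longrightarrow> 1 \<le> T x \<and> T x \<le> card A" for x
    using lower_A[of x] std_fillings_range[OF std, of x] A_subset_D by auto
  show "x \<in> D - B \<Longrightarrow> Suc (Suc (card A)) < T x \<and> T x \<le> card D" for x
    using lower_B[of x] std_fillings_range[OF std, of x] by auto
qed

lemma lower_part_std_fillings:
  assumes T: "T \<in> split_fillings" shows "lower_part T \<in> std_fillings A"
proof -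
  note std = split_fillings_std[OF T]
  have "inj_on (lower_part T) A"
    unfolding inj_on_def lower_part_def using std_fillings_inj[OF std] A_subset_D by (simp add: subset_eq)
  moreover have "lower_part T ` A \<subseteq> {1..card A}"
    using split_fillings_lower[OF T] by (auto simp: lower_part_def)
  moreover have "\<forall>x\<in>A. \<forall>y\<in>A. line_less x y \<longrightarrow> lower_part T x < lower_part T y"
    using std_fillings_less[OF std] A_subset_D by (simp add: subset_eq lower_part_def)
  ultimately show ?thesis by (simp add: std_fillings_def lower_part_def)
qed

lemma upper_part_std_fillings:
  assumes T: "T \<in> split_fillings" shows "upper_part T \<in> std_fillings C"
proof -
  note std = split_fillings_std[OF T]
  define \<sigma> where "\<sigma> = inv_into (D - B) \<rho>"
  have \<sigma>: "\<sigma> y \<in> D - B" "\<rho> (\<sigma> y) = y" if "y \<in> C" for y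
    using \<rho>_inv_into[OF that] by (simp_all add: \<sigma>_def)
  have val: "upper_part T y = Suc (card D) - T (\<sigma> y)"
    and bounds: "Suc (Suc (card A)) < T (\<sigma> y) \<and> T (\<sigma> y) \<le> card D" if "y \<in> C" for y
    using that split_fillings_upper[OF T \<sigma>(1)[OF that]] by (simp_all add: upper_part_def \<sigma>_def)
  have "inj_on (upper_part T) C"
  proof (rule inj_onI)
    fix y z assume y: "y \<in> C" and z: "z \<in> C" and eq: "upper_part T y = upper_part T z"
    then have "T (\<sigma> y) = T (\<sigma> z)" using val bounds by (metis diff_diff_cancel le_SucI)
    then have "\<sigma> y = \<sigma> z" using std_fillings_inj[OF std] \<sigma>(1) y z by blast
    then show "y = z" using \<sigma>(2) y z by metis
  qed
  moreover have "upper_part T ` C \<subseteq> {1..card C}"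
    using val bounds card_C by fastforce
  moreover have "upper_part T y < upper_part T z" if y: "y \<in> C" and z: "z \<in> C" and yz: "line_less y z" for y z
  proof -
    have "line_less (\<sigma> z) (\<sigma> y)" using \<rho>_reverses[OF \<sigma>(1)[OF z] \<sigma>(1)[OF y]] \<sigma>(2) y z yz by simp
    then have "T (\<sigma> z) < T (\<sigma> y)" using std_fillings_less[OF std] \<sigma>(1) y z by blast
    then show ?thesis using val[OF y] val[OF z] bounds[OF y] bounds[OF z] by simp
  qed
  ultimately show ?thesis by (simp add: std_fillings_def upper_part_def)
qed

lemma parts_glue:
  assumes S: "S \<in> std_fillings A" and R: "R \<in> std_fillings C"
  shows "lower_part (glue S R) = S" "upper_part (glue S R) = R"
proof -
  show "lower_part (glue S R) = S"
    using std_fillings_outside[OF S] by (auto simp: lower_part_def glue_def)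
  have "upper_part (glue S R) y = R y" for y
  proof (cases "y \<in> C")
    case True
    note \<sigma> = \<rho>_inv_into[OF True]
    have "R y \<le> card D" using std_fillings_range[OF R True] card_C by linarith
    then show ?thesis using glue_upper[OF S R \<sigma>(1)] \<sigma>(2) True by (simp add: upper_part_def)
  qed (simp add: upper_part_def std_fillings_outside[OF R])
  then show "upper_part (glue S R) = R" ..
qed

lemma glue_parts:
  assumes T: "T \<in> split_fillings" shows "glue (lower_part T) (upper_part T) = T"
proof
  note std = split_fillings_std[OF T]
  fix x show "glue (lower_part T) (upper_part T) x = T x"
  proof (cases "x \<in> D")
    case True
    then show ?thesis
    proof (cases rule: cells_cases)
      case 4
      have "\<rho> x \<in> C" "inv_into (D - B) \<rho> (\<rho> x) = x" using 4 \<rho>_image \<rho>_inj by (auto intro: inv_into_f_f)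
      then show ?thesis using 4 domino_cells A_subset_B split_fillings_upper[OF T 4]
        by (auto simp: glue_def upper_part_def)
    qed (use split_fillings_domino[OF T] domino_cells in \<open>auto simp: glue_def lower_part_def\<close>)
  next
    case False
    then show ?thesis
      using std_fillings_outside[OF std False] A_subset_D B_subset_D domino_cells
      by (auto simp: glue_def lower_part_def)
  qed
qed

theorem card_split_fillings: "card split_fillings = card (std_fillings A) * card (std_fillings C)"
proof -
  have "bij_betw (\<lambda>(S, R). glue S R) (std_fillings A \<times> std_fillings C) split_fillings"
    by (rule bij_betw_byWitness[where f' = "\<lambda>T. (lower_part T, upper_part T)"])
      (auto simp: parts_glue glue_parts glue_split_fillings lower_part_std_fillings upper_part_std_fillings)
  then show ?thesis by (simp add: bij_betw_same_card[symmetric] card_cartesian_product)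
qed

end

section \<open>Young diagrams and shifted Young diagrams\<close>

lemma mem_diagram_iff: "(i, j) \<in> diagram la \<longleftrightarrow> 1 \<le> i \<and> i \<le> length la \<and> 1 \<le> j \<and> j \<le> la ! (i - 1)"
  by (simp add: diagram_def)

lemma partition_nth_antimono: "is_partition la \<Longrightarrow> a \<le> b \<Longrightarrow> b < length la \<Longrightarrow> la ! b \<le> la ! a"
  unfolding is_partition_def using sorted_wrt_nth_less[of "(\<ge>)" la a b]
  by (cases "a = b") auto

lemma partition_nth_pos: "is_partition la \<Longrightarrow> i < length la \<Longrightarrow> 0 < la ! i"
  unfolding is_partition_def by (auto simp: in_set_conv_nth)

lemma diagram_down_closed:
  assumes "is_partition la" "(i, j) \<in> diagram la" "1 \<le> i'" "i' \<le> i" "1 \<le> j'" "j' \<le> j"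
  shows "(i', j') \<in> diagram la"
proof -
  have "la ! (i - 1) \<le> la ! (i' - 1)" using assms partition_nth_antimono[of la "i' - 1" "i - 1"] by (auto simp: mem_diagram_iff)
  then show ?thesis using assms by (auto simp: mem_diagram_iff)
qed

lemma card_diagram_row:
  assumes "i < length la" shows "card {j. (Suc i, j) \<in> diagram la} = la ! i"
proof -
  have "{j. (Suc i, j) \<in> diagram la} = {1..la ! i}" using assms by (auto simp: mem_diagram_iff)
  then show ?thesis by simp
qed

lemma card_diagram_first_column:
  assumes "is_partition la" shows "card {i. (i, 1) \<in> diagram la} = length la"
proof -
  have "{i. (i, 1) \<in> diagram la} = {1..length la}"
    using partition_nth_pos[OF assms] by (auto simp: mem_diagram_iff Suc_le_eq)
  then show ?thesis by simp
qed

lemma diagram_inj: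
  assumes "is_partition la" "is_partition mu" "diagram la = diagram mu"
  shows "la = mu"
proof (rule nth_equalityI)
  show len: "length la = length mu"
    using card_diagram_first_column[OF assms(1)] card_diagram_first_column[OF assms(2)] assms(3) by simp
  show "la ! i = mu ! i" if "i < length la" for i
    using card_diagram_row[OF that] card_diagram_row[of i mu] that len assms(3) by simp
qed

lemma down_closed_eq_atLeastAtMost:
  assumes fin: "finite R" and pos: "\<forall>j\<in>R. 1 \<le> j" and dc: "\<forall>j\<in>R. \<forall>j'. 1 \<le> j' \<longrightarrow> j' \<le> j \<longrightarrow> j' \<in> R"
  shows "R = {1..card R}"
proof (cases "R = {}")
  case True then show ?thesis by simp
next
  case False
  define M where "M = Max R"
  have MR: "M \<in> R" using Max_in[OF fin False] by (simp add: M_def)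
  have "R = {1..M}"
  proof
    show "R \<subseteq> {1..M}" using pos Max_ge[OF fin] by (auto simp: M_def)
    show "{1..M} \<subseteq> R" using dc MR by auto
  qed
  then show ?thesis by simp
qed

lemma down_closed_cells_iff:
  assumes fin: "finite S" and pos: "\<And>i j. (i, j) \<in> S \<Longrightarrow> 1 \<le> i \<and> 1 \<le> j"
    and dc: "\<And>i j i' j'.
      (i, j) \<in> S \<Longrightarrow> 1 \<le> i' \<Longrightarrow> i' \<le> i \<Longrightarrow> 1 \<le> j' \<Longrightarrow> j' \<le> j \<Longrightarrow> (i', j') \<in> S"
  shows "(i, 1) \<in> S \<longleftrightarrow> 1 \<le> i \<and> i \<le> card {i. (i, 1) \<in> S}"
    and "(i, j) \<in> S \<longleftrightarrow>
      1 \<le> i \<and> i \<le> card {i. (i, 1) \<in> S} \<and> 1 \<le> j \<and> j \<le> card {j. (i, j) \<in> S}"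
proof -
  have "{j. (i, j) \<in> S} \<subseteq> snd ` S" "{i. (i, 1) \<in> S} \<subseteq> fst ` S" by force+
  then have fin_row: "finite {j. (i, j) \<in> S}" and fin_col: "finite {i. (i, 1) \<in> S}"
    using fin by (auto intro: finite_subset)
  have row: "{j. (i, j) \<in> S} = {1..card {j. (i, j) \<in> S}}"
    by (rule down_closed_eq_atLeastAtMost[OF fin_row]) (use pos dc[of i _ i] in auto)
  have col: "{i. (i, 1) \<in> S} = {1..card {i. (i, 1) \<in> S}}"
    by (rule down_closed_eq_atLeastAtMost[OF fin_col]) (use pos dc[of _ 1 _ 1] in auto)
  show "(i, 1) \<in> S \<longleftrightarrow> 1 \<le> i \<and> i \<le> card {i. (i, 1) \<in> S}"
    using arg_cong[OF col, of "\<lambda>X. i \<in> X"] by simp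
  have "(i, j) \<in> S \<longleftrightarrow> i \<in> {i. (i, 1) \<in> S} \<and> j \<in> {j. (i, j) \<in> S}"
    using pos dc[of i j i 1] by auto
  also have "\<dots> \<longleftrightarrow> i \<in> {1..card {i. (i, 1) \<in> S}} \<and> j \<in> {1..card {j. (i, j) \<in> S}}"
    by (simp only: row[symmetric] col[symmetric])
  finally show "(i, j) \<in> S \<longleftrightarrow>
      1 \<le> i \<and> i \<le> card {i. (i, 1) \<in> S} \<and> 1 \<le> j \<and> j \<le> card {j. (i, j) \<in> S}"
    by simp
qed

lemma ex_partition_diagram:
  assumes fin: "finite S" and pos: "\<And>i j. (i, j) \<in> S \<Longrightarrow> 1 \<le> i \<and> 1 \<le> j"
    and dc: "\<And>i j i' j'.
      (i, j) \<in> S \<Longrightarrow> 1 \<le> i' \<Longrightarrow> i' \<le> i \<Longrightarrow> 1 \<le> j' \<Longrightarrow> j' \<le> j \<Longrightarrow> (i', j') \<in> S"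
  shows "\<exists>la. is_partition la \<and> diagram la = S"
proof -
  define r where "r = card {i. (i, 1) \<in> S}"
  define L where "L i = card {j. (i, j) \<in> S}" for i
  have first_column: "(i, 1) \<in> S \<longleftrightarrow> 1 \<le> i \<and> i \<le> r" for i
    unfolding r_def using fin pos dc by (rule down_closed_cells_iff(1))
  have cells: "(i, j) \<in> S \<longleftrightarrow> 1 \<le> i \<and> i \<le> r \<and> 1 \<le> j \<and> j \<le> L i" for i j
    unfolding r_def L_def using fin pos dc by (rule down_closed_cells_iff(2))
  define la where "la = map L [1..<Suc r]"
  have len: "length la = r" by (simp add: la_def del: upt_Suc)
  have nth: "i < r \<Longrightarrow> la ! i = L (Suc i)" for i by (simp add: la_def nth_map del: upt_Suc)
  have L_pos: "1 \<le> i \<Longrightarrow> i \<le> r \<Longrightarrow> 1 \<le> L i" for i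
    using cells[of i 1] first_column[of i] by simp
  have L_antimono: "L i' \<le> L i" if "1 \<le> i" "i \<le> i'" "i' \<le> r" for i i'
    using cells[of i' "L i'"] cells[of i "L i'"] dc[of i' "L i'" i "L i'"] L_pos[of i'] that by auto
  have "la ! i > 0" if "i < length la" for i
    using L_pos[of "Suc i"] nth[of i] len that by simp
  then have "is_partition la"
    unfolding is_partition_def sorted_wrt_iff_nth_less
    using len nth L_antimono by (auto simp: in_set_conv_nth)
  moreover have "diagram la = S"
  proof (intro set_eqI)
    fix x :: "nat \<times> nat"
    obtain i j where x: "x = (i, j)" by force
    show "x \<in> diagram la \<longleftrightarrow> x \<in> S"
    proof (cases "1 \<le> i \<and> i \<le> r")
      case True
      then have "i - 1 < r" "Suc (i - 1) = i" by auto
      then have "la ! (i - 1) = L i" using nth[of "i - 1"] by simp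
      then show ?thesis using True cells[of i j] len by (simp add: x mem_diagram_iff)
    qed (use cells len in \<open>auto simp: x mem_diagram_iff\<close>)
  qed
  ultimately show ?thesis by blast
qed

lemma mem_shifted_diagram_iff: "(i, j) \<in> shifted_diagram la \<longleftrightarrow> i \<le> j \<and> (i, Suc j - i) \<in> diagram la"
proof
  assume "(i, j) \<in> shifted_diagram la"
  then obtain i0 j0 where h: "(i, j) = (i0, j0 + i0 - 1)" "1 \<le> i0" "i0 \<le> length la" "1 \<le> j0" "j0 \<le> la ! (i0 - 1)"
    unfolding shifted_diagram_def by blast
  then show "i \<le> j \<and> (i, Suc j - i) \<in> diagram la" by (auto simp: mem_diagram_iff)
next
  assume h: "i \<le> j \<and> (i, Suc j - i) \<in> diagram la"
  have e: "(i, j) = (i, (Suc j - i) + i - 1)" using h by auto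
  show "(i, j) \<in> shifted_diagram la" unfolding shifted_diagram_def mem_Collect_eq
    by (rule exI[of _ i], rule exI[of _ "Suc j - i"]) (use h e in \<open>auto simp: mem_diagram_iff\<close>)
qed

lemma strict_partition_imp_partition: "is_strict_partition la \<Longrightarrow> is_partition la"
  unfolding is_strict_partition_def is_partition_def
  by (auto elim: sorted_wrt_mono_rel[rotated])

lemma strict_partition_nth_gap:
  assumes "is_strict_partition la" "a + d < length la"
  shows "la ! (a + d) + d \<le> la ! a"
  using assms(2)
proof (induction d)
  case 0 then show ?case by simp
next
  case (Suc d)
  have "la ! (a + Suc d) < la ! (a + d)"
    using assms(1) Suc.prems unfolding is_strict_partition_def
    by (auto dest: sorted_wrt_nth_less)
  then show ?case using Suc by simp
qed

lemma shifted_diagram_down_closed: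
  assumes sp: "is_strict_partition la" and ij: "(i, j) \<in> shifted_diagram la"
    and "1 \<le> i'" "i' \<le> i" "i' \<le> j'" "j' \<le> j"
  shows "(i', j') \<in> shifted_diagram la"
proof -
  have h: "i \<le> j" "1 \<le> i" "i \<le> length la" "Suc j - i \<le> la ! (i - 1)"
    using ij by (auto simp: mem_shifted_diagram_iff mem_diagram_iff)
  have "la ! ((i' - 1) + (i - i')) + (i - i') \<le> la ! (i' - 1)"
    using strict_partition_nth_gap[OF sp, of "i' - 1" "i - i'"] h assms by simp
  moreover have "(i' - 1) + (i - i') = i - 1" using assms h by simp
  ultimately have "la ! (i - 1) + (i - i') \<le> la ! (i' - 1)" by simp
  then show ?thesis using h assms by (auto simp: mem_shifted_diagram_iff mem_diagram_iff)
qed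

lemma mem_diagram_iff_shifted: "(i, j) \<in> diagram la \<longleftrightarrow> 1 \<le> j \<and> (i, j + i - 1) \<in> shifted_diagram la"
  by (auto simp: mem_shifted_diagram_iff mem_diagram_iff)

lemma shifted_diagram_inj:
  assumes "is_strict_partition la" "is_strict_partition mu" "shifted_diagram la = shifted_diagram mu"
  shows "la = mu"
proof -
  have "diagram la = diagram mu"
    using assms(3) by (auto simp: mem_diagram_iff_shifted)
  then show ?thesis using diagram_inj strict_partition_imp_partition assms by blast
qed

lemma strict_partition_if_rows_shift:
  assumes la: "is_partition la"
    and up: "\<And>i j. 1 \<le> i \<Longrightarrow> (Suc i, j) \<in> shifted_diagram la \<Longrightarrow> (i, j) \<in> shifted_diagram la"
  shows "is_strict_partition la"
proof -
  have "la ! Suc a < la ! a" if a: "Suc a < length la" for a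
  proof -
    txt \<open>The last cell of row a + 2 has a cell above it in row a + 1.\<close>
    have "(Suc (Suc a), la ! Suc a + Suc a) \<in> shifted_diagram la"
      using a partition_nth_pos[OF la, of "Suc a"] by (simp add: mem_shifted_diagram_iff mem_diagram_iff)
    then have "(Suc a, la ! Suc a + Suc a) \<in> shifted_diagram la" by (rule up[rotated]) simp
    then show ?thesis by (simp add: mem_shifted_diagram_iff mem_diagram_iff)
  qed
  then have "sorted_wrt (>) la" by (simp add: sorted_wrt_iff_nth_Suc_transp transp_def)
  then show ?thesis using la by (simp add: is_strict_partition_def is_partition_def)
qed

lemma ex_strict_partition_shifted_diagram:
  assumes fin: "finite S" and pos: "\<And>i j. (i, j) \<in> S \<Longrightarrow> 1 \<le> i \<and> i \<le> j"
    and dc: "\<And>i j i' j'.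
      (i, j) \<in> S \<Longrightarrow> 1 \<le> i' \<Longrightarrow> i' \<le> i \<Longrightarrow> i' \<le> j' \<Longrightarrow> j' \<le> j \<Longrightarrow> (i', j') \<in> S"
  shows "\<exists>la. is_strict_partition la \<and> shifted_diagram la = S"
proof -
  define S' where "S' = (\<lambda>(i, j). (i, Suc j - i)) ` S"
  have mem_S': "(i, j) \<in> S' \<longleftrightarrow> 1 \<le> j \<and> (i, j + i - 1) \<in> S" for i j
  proof
    assume "(i, j) \<in> S'"
    then obtain i0 j0 where "(i0, j0) \<in> S" "i = i0" "j = Suc j0 - i0" by (auto simp: S'_def)
    moreover from this have "i0 \<le> j0" using pos by blast
    ultimately show "1 \<le> j \<and> (i, j + i - 1) \<in> S" by simp
  next
    assume h: "1 \<le> j \<and> (i, j + i - 1) \<in> S"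
    then have "(i, j) = (\<lambda>(i, j). (i, Suc j - i)) (i, j + i - 1)" by auto
    then show "(i, j) \<in> S'" unfolding S'_def using h by blast
  qed
  have "\<exists>la. is_partition la \<and> diagram la = S'"
  proof (rule ex_partition_diagram)
    show "finite S'" using fin by (simp add: S'_def)
    show "\<And>i j. (i, j) \<in> S' \<Longrightarrow> 1 \<le> i \<and> 1 \<le> j" using mem_S' pos by blast
    show "(i', j') \<in> S'" if "(i, j) \<in> S'" "1 \<le> i'" "i' \<le> i" "1 \<le> j'" "j' \<le> j" for i j i' j'
      using dc[of i "j + i - 1" i' "j' + i' - 1"] that mem_S' by simp
  qed
  then obtain la where la: "is_partition la" "diagram la = S'" by blast
  have shifted: "shifted_diagram la = S"
  proof (intro set_eqI)
    fix x :: "nat \<times> nat"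
    obtain i j where x: "x = (i, j)" by force
    show "x \<in> shifted_diagram la \<longleftrightarrow> x \<in> S"
      unfolding x mem_shifted_diagram_iff la(2) mem_S' using pos by (auto simp: Suc_diff_le)
  qed
  have "(i, j) \<in> S" if "1 \<le> i" "(Suc i, j) \<in> S" for i j
    using dc[OF that(2), of i j] pos[OF that(2)] that(1) by simp
  then have "is_strict_partition la"
    using strict_partition_if_rows_shift[OF la(1)] shifted by blast
  then show ?thesis using shifted by blast
qed

lemma finite_diagram: "finite (diagram la)"
proof -
  have "diagram la \<subseteq> {0..length la} \<times> {0..sum_list la}"
  proof
    fix x :: "nat \<times> nat" assume "x \<in> diagram la"
    then obtain i j where x: "x = (i, j)" "1 \<le> i" "i \<le> length la" "1 \<le> j" "j \<le> la ! (i - 1)"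
      by (cases x) (auto simp: mem_diagram_iff)
    moreover have "la ! (i - 1) \<le> sum_list la" using elem_le_sum_list[of "i - 1" la] x by simp
    ultimately show "x \<in> {0..length la} \<times> {0..sum_list la}" by auto
  qed
  then show ?thesis by (rule finite_subset) simp
qed

lemma shifted_diagram_eq_image: "shifted_diagram la = (\<lambda>(i, j). (i, j + i - 1)) ` diagram la"
  by (auto simp: shifted_diagram_def diagram_def image_def)

lemma finite_shifted_diagram: "finite (shifted_diagram la)"
  by (simp add: shifted_diagram_eq_image finite_diagram)

lemma f_syt_eq_card: "f_syt la = card (std_fillings (diagram la))"
  by (simp add: f_syt_def num_std_eq_card_std_fillings finite_diagram)

lemma g_syt_eq_card: "g_syt la = card (std_fillings (shifted_diagram la))"
  by (simp add: g_syt_def num_std_eq_card_std_fillings finite_shifted_diagram)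

section \<open>Domino pairs of order ideals\<close>

text \<open>Cells are compared componentwise (the product order of HOL-Library.Product_Order).\<close>
definition order_ideal :: "(nat \<times> nat) set \<Rightarrow> (nat \<times> nat) set \<Rightarrow> bool" where
  "order_ideal D S \<longleftrightarrow> S \<subseteq> D \<and> (\<forall>x\<in>S. \<forall>y\<in>D. y \<le> x \<longrightarrow> y \<in> S)"

lemma line_less_imp_le: "line_less x y \<Longrightarrow> x \<le> y"
  by (auto simp: line_less_def less_eq_prod_def)

text \<open>An abstract family of shapes: ispart selects the admissible index lists, dg draws them,
  and the drawings are exactly the order ideals of D (for partitions inside a Young diagram,
  or strict partitions inside a shifted one).\<close>
locale ideal_shape = line_convex_cells D for D :: "(nat \<times> nat) set" +
  fixes ispart :: "nat list \<Rightarrow> bool" and dg :: "nat list \<Rightarrow> (nat \<times> nat) set"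
  assumes corner_in: "\<And>x y. x \<in> D \<Longrightarrow> y \<in> D \<Longrightarrow> y \<le> x \<Longrightarrow> (fst y, snd x) \<in> D"
    and dg_inj: "\<And>mu nu. ispart mu \<Longrightarrow> ispart nu \<Longrightarrow> dg mu = dg nu \<Longrightarrow> mu = nu"
    and order_ideal_iff_dg: "\<And>S. S \<subseteq> D \<Longrightarrow> order_ideal D S \<longleftrightarrow> (\<exists>mu. ispart mu \<and> dg mu = S)"
begin

definition shape_of :: "(nat \<times> nat) set \<Rightarrow> nat list" where
  "shape_of S = (THE mu. ispart mu \<and> dg mu = S)"

lemma shape_of_dg:
  assumes "ispart mu" shows "shape_of (dg mu) = mu"
  unfolding shape_of_def by (rule the_equality) (use assms dg_inj in auto)

lemma shape_of:
  assumes "order_ideal D S" shows "ispart (shape_of S)" "dg (shape_of S) = S"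
proof -
  obtain mu where "ispart mu" "dg mu = S"
    using assms order_ideal_iff_dg by (auto simp: order_ideal_def)
  then show "ispart (shape_of S)" "dg (shape_of S) = S" using shape_of_dg by auto
qed

lemma order_ideal_dg: "ispart mu \<Longrightarrow> dg mu \<subseteq> D \<Longrightarrow> order_ideal D (dg mu)"
  using order_ideal_iff_dg by blast

definition lower_set :: "(nat \<times> nat \<Rightarrow> nat) \<Rightarrow> nat \<Rightarrow> (nat \<times> nat) set" where
  "lower_set T v = {x \<in> D. T x \<le> v}"

lemma order_ideal_lower_set:
  assumes T: "T \<in> std_fillings D" shows "order_ideal D (lower_set T v)"
  unfolding order_ideal_def
proof (intro conjI ballI impI)
  show "lower_set T v \<subseteq> D" by (auto simp: lower_set_def)
next
  fix x y assume x: "x \<in> lower_set T v" and y: "y \<in> D" and "y \<le> x"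
  txt \<open>Walk from y to x through the corner in the row of y and the column of x.\<close>
  define z where "z = (fst y, snd x)"
  have x': "x \<in> D" "T x \<le> v" using x by (auto simp: lower_set_def)
  have "y \<le> z" "z \<le> x" using \<open>y \<le> x\<close> by (auto simp: z_def less_eq_prod_def)
  have z: "z \<in> D" using corner_in[OF x'(1) y \<open>y \<le> x\<close>] by (simp add: z_def)
  have "y = z \<or> line_less y z" "z = x \<or> line_less z x"
    using \<open>y \<le> z\<close> \<open>z \<le> x\<close> by (auto simp: z_def line_less_def less_eq_prod_def prod_eq_iff)
  then have "T y \<le> T z" "T z \<le> T x"
    using std_fillings_less[OF T y z] std_fillings_less[OF T z x'(1)] by auto
  then show "y \<in> lower_set T v" using x' y by (simp add: lower_set_def)
qed

lemma card_lower_set: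
  assumes T: "T \<in> std_fillings D" and v: "v \<le> card D"
  shows "card (lower_set T v) = v"
proof -
  have "T ` lower_set T v = {1..v}"
    using std_fillings_image[OF finite_cells T] std_fillings_range[OF T] v
    by (fastforce simp: lower_set_def)
  moreover have "inj_on T (lower_set T v)"
    using std_fillings_inj[OF T] by (auto simp: lower_set_def inj_on_def)
  ultimately show ?thesis by (metis card_atLeastAtMost card_image diff_Suc_1)
qed

end

text \<open>\<rho> plays the role of the point reflection of a rectangle, or of the reflection of a staircase
  in its anti-diagonal.\<close>
locale reflected_shape = ideal_shape +
  fixes \<rho> :: "nat \<times> nat \<Rightarrow> nat \<times> nat"
  assumes \<rho>_in: "\<And>x. x \<in> D \<Longrightarrow> \<rho> x \<in> D"
    and \<rho>_\<rho>: "\<And>x. x \<in> D \<Longrightarrow> \<rho> (\<rho> x) = x"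
    and \<rho>_antimono: "\<And>x y. x \<in> D \<Longrightarrow> y \<in> D \<Longrightarrow> x \<le> y \<Longrightarrow> \<rho> y \<le> \<rho> x"
    and \<rho>_line_less: "\<And>x y. x \<in> D \<Longrightarrow> y \<in> D \<Longrightarrow> line_less x y \<longleftrightarrow> line_less (\<rho> y) (\<rho> x)"
begin

definition complement :: "nat list \<Rightarrow> nat list" where
  "complement nu = shape_of (\<rho> ` (D - dg nu))"

definition domino_pairs :: "(nat list \<times> nat list) set" where
  "domino_pairs = {(mu, nu). ispart mu \<and> ispart nu \<and> dg mu \<subseteq> dg nu \<and> dg nu \<subseteq> D \<and>
      (\<exists>i j. (i, j) \<in> D - dg mu \<and> dg nu = dg mu \<union> {(i, j), (i, j + 1)})}"

definition domino_pair_of :: "(nat \<times> nat \<Rightarrow> nat) \<times> nat \<Rightarrow> nat list \<times> nat list" where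
  "domino_pair_of h = (shape_of (lower_set (fst h) (snd h - 1)), shape_of (lower_set (fst h) (Suc (snd h))))"

lemma order_ideal_reflected_complement:
  assumes B: "order_ideal D B" shows "order_ideal D (\<rho> ` (D - B))"
  unfolding order_ideal_def
proof (intro conjI ballI impI)
  show "\<rho> ` (D - B) \<subseteq> D" using \<rho>_in by auto
next
  fix z w assume "z \<in> \<rho> ` (D - B)" and w: "w \<in> D" and "w \<le> z"
  then obtain x where x: "x \<in> D - B" "z = \<rho> x" by blast
  have "x \<le> \<rho> w" using \<rho>_antimono[OF w _ \<open>w \<le> z\<close>] x \<rho>_in \<rho>_\<rho> by auto
  then have "\<rho> w \<notin> B" using B x \<rho>_in[OF w] by (auto simp: order_ideal_def)
  then show "w \<in> \<rho> ` (D - B)" using \<rho>_in[OF w] \<rho>_\<rho>[OF w] by (metis DiffI image_eqI w)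
qed

lemma complement:
  assumes "ispart nu" "dg nu \<subseteq> D"
  shows "ispart (complement nu)" "dg (complement nu) = \<rho> ` (D - dg nu)"
  using shape_of[OF order_ideal_reflected_complement[OF order_ideal_dg[OF assms]]]
  by (simp_all add: complement_def)

lemma hdomino_lower_sets:
  assumes h: "(T, a) \<in> hdominoes D"
  shows "lower_set T (Suc a) = lower_set T (a - 1) \<union> {entry_cell D T a, right_of (entry_cell D T a)}"
    and "entry_cell D T a \<notin> lower_set T (a - 1)"
proof -
  have T: "T \<in> std_fillings D" and a: "1 \<le> a" "a < card D"
    and next_cell: "entry_cell D T (Suc a) = right_of (entry_cell D T a)"
    using h by (auto simp: hdominoes_def)
  have x: "entry_cell D T a \<in> D" "T (entry_cell D T a) = a"
    and y: "entry_cell D T (Suc a) \<in> D" "T (entry_cell D T (Suc a)) = Suc a"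
    using entry_cell[OF finite_cells T] a by auto
  have "z \<in> lower_set T (Suc a) \<longleftrightarrow>
      z \<in> lower_set T (a - 1) \<or> z = entry_cell D T a \<or> z = entry_cell D T (Suc a)" for z
  proof (cases "z \<in> D")
    case True
    have "T z \<le> Suc a \<longleftrightarrow> T z \<le> a - 1 \<or> T z = a \<or> T z = Suc a" using a by arith
    moreover have "T z = v \<longleftrightarrow> z = entry_cell D T v" if "v \<in> {a, Suc a}" for v
      using entry_cell_eq[OF T True] x y that by auto
    ultimately show ?thesis using True by (simp add: lower_set_def)
  qed (use x y in \<open>auto simp: lower_set_def\<close>)
  then show "lower_set T (Suc a) = lower_set T (a - 1) \<union> {entry_cell D T a, right_of (entry_cell D T a)}"
    using next_cell by auto
  show "entry_cell D T a \<notin> lower_set T (a - 1)" using x a by (simp add: lower_set_def)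
qed

lemma domino_pair_of_hdomino:
  assumes h: "(T, a) \<in> hdominoes D"
  shows "domino_pair_of (T, a) \<in> domino_pairs"
proof -
  have T: "T \<in> std_fillings D" using h by (simp add: hdominoes_def)
  define mu nu where "mu = shape_of (lower_set T (a - 1))" and "nu = shape_of (lower_set T (Suc a))"
  have mu: "ispart mu" "dg mu = lower_set T (a - 1)" and nu: "ispart nu" "dg nu = lower_set T (Suc a)"
    using shape_of[OF order_ideal_lower_set[OF T]] by (simp_all add: mu_def nu_def)
  obtain i j where ij: "entry_cell D T a = (i, j)" by force
  note sets = hdomino_lower_sets[OF h, unfolded ij]
  have "dg nu \<subseteq> D" using nu by (auto simp: lower_set_def)
  moreover have "(i, j) \<in> D - dg mu" "dg nu = dg mu \<union> {(i, j), (i, j + 1)}"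
    using sets mu nu \<open>dg nu \<subseteq> D\<close> by (auto simp: right_of_def)
  ultimately have "(mu, nu) \<in> domino_pairs"
    using mu nu unfolding domino_pairs_def by blast
  then show ?thesis by (simp add: domino_pair_of_def mu_def nu_def)
qed

lemma domino_split_of_domino_pair:
  assumes p: "(mu, nu) \<in> domino_pairs"
    and ij: "(i, j) \<notin> dg mu" "dg nu = dg mu \<union> {(i, j), (i, j + 1)}"
  shows "domino_split D (dg mu) (dg nu) (dg (complement nu)) (i, j) (i, j + 1) \<rho>"
proof -
  have mu: "ispart mu" "dg mu \<subseteq> D" and nu: "ispart nu" "dg nu \<subseteq> D"
    using p by (auto simp: domino_pairs_def)
  have A: "order_ideal D (dg mu)" and B: "order_ideal D (dg nu)"
    using order_ideal_dg mu nu by auto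
  have "(i, j + 1) \<notin> dg mu"
  proof
    assume "(i, j + 1) \<in> dg mu"
    moreover have "(i, j) \<in> D" using ij nu by auto
    ultimately have "(i, j) \<in> dg mu" using A by (auto simp: order_ideal_def)
    with ij show False by simp
  qed
  then have "dg nu - dg mu = {(i, j), (i, j + 1)}" using ij by auto
  moreover have "inj_on \<rho> (D - dg nu)"
    by (rule inj_on_subset[of _ D]) (auto intro: inj_on_inverseI[where g = \<rho>] simp: \<rho>_\<rho>)
  ultimately show ?thesis
    using finite_cells p A B line_less_imp_le \<rho>_line_less complement[OF nu]
    by unfold_locales (auto simp: domino_pairs_def order_ideal_def line_less_def)
qed

lemma hdominoes_fiber:
  assumes p: "(mu, nu) \<in> domino_pairs" and ij: "(i, j) \<in> D - dg mu" "dg nu = dg mu \<union> {(i, j), (i, j + 1)}"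
    and split: "domino_split D (dg mu) (dg nu) (dg (complement nu)) (i, j) (i, j + 1) \<rho>"
  shows "{h \<in> hdominoes D. domino_pair_of h = (mu, nu)} =
    (\<lambda>T. (T, Suc (card (dg mu)))) ` domino_split.split_fillings D (dg mu) (dg nu)"
proof -
  interpret s: domino_split D "dg mu" "dg nu" "dg (complement nu)" "(i, j)" "(i, j + 1)" \<rho>
    by (fact split)
  have mu: "ispart mu" and nu: "ispart nu" using p by (auto simp: domino_pairs_def)
  show ?thesis
  proof (intro set_eqI iffI)
    fix h assume "h \<in> {h \<in> hdominoes D. domino_pair_of h = (mu, nu)}"
    then obtain T a where h: "h = (T, a)" "(T, a) \<in> hdominoes D" "domino_pair_of (T, a) = (mu, nu)"
      by (cases h) auto
    have T: "T \<in> std_fillings D" and a: "1 \<le> a" "a < card D" using h(2) by (auto simp: hdominoes_def)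
    have A: "dg mu = lower_set T (a - 1)" and B: "dg nu = lower_set T (Suc a)"
      using h(3) shape_of[OF order_ideal_lower_set[OF T]] by (auto simp: domino_pair_of_def)
    have k: "card (dg mu) = a - 1" using A card_lower_set[OF T, of "a - 1"] a by simp
    then have "{x \<in> D. T x \<le> card (dg mu)} = dg mu" "{x \<in> D. T x \<le> Suc (Suc (card (dg mu)))} = dg nu"
      using A B a by (simp_all add: lower_set_def)
    then have "T \<in> s.split_fillings" unfolding s.split_fillings_def using T by blast
    moreover have "a = Suc (card (dg mu))" using k a by simp
    ultimately show "h \<in> (\<lambda>T. (T, Suc (card (dg mu)))) ` s.split_fillings" using h(1) by simp
  next
    fix h assume "h \<in> (\<lambda>T. (T, Suc (card (dg mu)))) ` s.split_fillings"
    then obtain T where T: "T \<in> s.split_fillings" and h: "h = (T, Suc (card (dg mu)))" by blast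
    note std = s.split_fillings_std[OF T]
    have cells: "(i, j) \<in> D" "(i, j + 1) \<in> D" using ij s.B_subset_D by auto
    have "entry_cell D T (Suc (card (dg mu))) = (i, j)"
      "entry_cell D T (Suc (Suc (card (dg mu)))) = (i, j + 1)"
      using entry_cell_eq[OF std cells(1)] entry_cell_eq[OF std cells(2)] s.split_fillings_domino[OF T] by simp_all
    then have "(T, Suc (card (dg mu))) \<in> hdominoes D"
      using std s.card_B_le by (simp add: hdominoes_def right_of_def)
    moreover have "lower_set T (card (dg mu)) = dg mu" "lower_set T (Suc (Suc (card (dg mu)))) = dg nu"
      using T by (simp_all add: s.split_fillings_def lower_set_def)
    then have "domino_pair_of (T, Suc (card (dg mu))) = (mu, nu)"
      using shape_of_dg[OF mu] shape_of_dg[OF nu] by (simp add: domino_pair_of_def)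
    ultimately show "h \<in> {h \<in> hdominoes D. domino_pair_of h = (mu, nu)}" using h by simp
  qed
qed

lemma card_hdominoes_fiber:
  assumes p: "(mu, nu) \<in> domino_pairs"
  shows "card {h \<in> hdominoes D. domino_pair_of h = (mu, nu)} =
    card (std_fillings (dg mu)) * card (std_fillings (dg (complement nu)))"
proof -
  obtain i j where ij: "(i, j) \<in> D - dg mu" "dg nu = dg mu \<union> {(i, j), (i, j + 1)}"
    using p by (auto simp: domino_pairs_def)
  note split = domino_split_of_domino_pair[OF p _ ij(2)]
  interpret s: domino_split D "dg mu" "dg nu" "dg (complement nu)" "(i, j)" "(i, j + 1)" \<rho>
    using split ij by simp
  have "inj_on (\<lambda>T. (T, Suc (card (dg mu)))) s.split_fillings" by (rule inj_onI) simp
  then show ?thesis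
    using hdominoes_fiber[OF p ij] split ij s.card_split_fillings by (simp add: card_image)
qed

lemma finite_domino_pairs: "finite domino_pairs"
proof -
  have "inj_on (\<lambda>(mu, nu). (dg mu, dg nu)) domino_pairs"
    by (rule inj_onI) (auto simp: domino_pairs_def dest: dg_inj)
  moreover have "(\<lambda>(mu, nu). (dg mu, dg nu)) ` domino_pairs \<subseteq> Pow D \<times> Pow D"
    by (auto simp: domino_pairs_def)
  ultimately show ?thesis
    using finite_cells by (meson finite_Pow_iff finite_SigmaI finite_imageD finite_subset)
qed

theorem sum_domino_pairs_eq_card_hdominoes:
  "(\<Sum>(mu, nu) \<in> domino_pairs. card (std_fillings (dg mu)) * card (std_fillings (dg (complement nu))))
    = card (hdominoes D)"
proof -
  have "finite (hdominoes D)"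
    using finite_std_fillings[OF finite_cells] by (intro finite_subset[OF hdominoes_subset]) simp
  then have "card (hdominoes D) = (\<Sum>p \<in> domino_pairs. card {h \<in> hdominoes D. domino_pair_of h = p})"
    using card_eq_sum sum.group[of "hdominoes D" domino_pairs domino_pair_of "\<lambda>_. 1 :: nat"]
      finite_domino_pairs domino_pair_of_hdomino by fastforce
  also have "\<dots> = (\<Sum>(mu, nu) \<in> domino_pairs. card (std_fillings (dg mu)) * card (std_fillings (dg (complement nu))))"
    by (rule sum.cong) (auto simp: card_hdominoes_fiber)
  finally show ?thesis by simp
qed

end

section \<open>The rectangle and the staircase\<close>

lemma ideal_shape_diagram:
  assumes la: "is_partition la" shows "ideal_shape (diagram la) is_partition diagram"
proof
  have pos: "1 \<le> i" "1 \<le> j" if "(i, j) \<in> diagram la" for i j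
    using that by (simp_all add: mem_diagram_iff)
  note down = diagram_down_closed[OF la]
  show "finite (diagram la)" by (rule finite_diagram)
  show "(i, j'') \<in> diagram la" if "(i, j) \<in> diagram la" "(i, j') \<in> diagram la" "j \<le> j''" "j'' \<le> j'"
    for i j j' j''
    by (rule down[OF that(2)]) (use that pos[OF that(1)] in simp_all)
  show "(i'', j) \<in> diagram la" if "(i, j) \<in> diagram la" "(i', j) \<in> diagram la" "i \<le> i''" "i'' \<le> i'"
    for i i' i'' j
    by (rule down[OF that(2)]) (use that pos[OF that(1)] in simp_all)
  show "(fst y, snd x) \<in> diagram la" if "x \<in> diagram la" "y \<in> diagram la" "y \<le> x" for x y
    by (rule down[of "fst x" "snd x"]) (use that pos[of "fst y" "snd y"] pos[of "fst x" "snd x"] in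
        \<open>simp_all add: less_eq_prod_def\<close>)
  show "mu = nu" if "is_partition mu" "is_partition nu" "diagram mu = diagram nu" for mu nu
    using diagram_inj that .
  show "order_ideal (diagram la) S \<longleftrightarrow> (\<exists>mu. is_partition mu \<and> diagram mu = S)"
    if S: "S \<subseteq> diagram la" for S
  proof
    assume ideal: "order_ideal (diagram la) S"
    show "\<exists>mu. is_partition mu \<and> diagram mu = S"
    proof (rule ex_partition_diagram)
      show "finite S" using S finite_diagram by (rule finite_subset)
      show "1 \<le> i \<and> 1 \<le> j" if "(i, j) \<in> S" for i j using that S pos by blast
      show "(i', j') \<in> S" if ij: "(i, j) \<in> S" "1 \<le> i'" "i' \<le> i" "1 \<le> j'" "j' \<le> j" for i j i' j'
      proof -
        have "(i', j') \<in> diagram la" by (rule down) (use ij S in auto)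
        then show ?thesis using ideal ij unfolding order_ideal_def by (metis Pair_le)
      qed
    qed
  next
    assume "\<exists>mu. is_partition mu \<and> diagram mu = S"
    then obtain mu where mu: "is_partition mu" "diagram mu = S" by blast
    have "y \<in> S" if "x \<in> S" "y \<in> diagram la" "y \<le> x" for x y
    proof -
      have "(fst y, snd y) \<in> diagram mu"
        by (rule diagram_down_closed[OF mu(1), of "fst x" "snd x"])
          (use that mu(2) pos[of "fst y" "snd y"] in \<open>simp_all add: less_eq_prod_def\<close>)
      then show ?thesis using mu(2) by simp
    qed
    then show "order_ideal (diagram la) S" using S by (simp add: order_ideal_def)
  qed
qed

lemma ideal_shape_shifted_diagram:
  assumes la: "is_strict_partition la"
  shows "ideal_shape (shifted_diagram la) is_strict_partition shifted_diagram"
proof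
  have pos: "1 \<le> i" "i \<le> j" if "(i, j) \<in> shifted_diagram la" for i j
    using that by (simp_all add: mem_shifted_diagram_iff mem_diagram_iff)
  note down = shifted_diagram_down_closed[OF la]
  show "finite (shifted_diagram la)" by (rule finite_shifted_diagram)
  show "(i, j'') \<in> shifted_diagram la"
    if "(i, j) \<in> shifted_diagram la" "(i, j') \<in> shifted_diagram la" "j \<le> j''" "j'' \<le> j'" for i j j' j''
    by (rule down[OF that(2)]) (use that pos[OF that(1)] in simp_all)
  show "(i'', j) \<in> shifted_diagram la"
    if "(i, j) \<in> shifted_diagram la" "(i', j) \<in> shifted_diagram la" "i \<le> i''" "i'' \<le> i'" for i i' i'' j
    by (rule down[OF that(2)]) (use that pos[OF that(1)] pos[OF that(2)] in simp_all)
  show "(fst y, snd x) \<in> shifted_diagram la"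
    if "x \<in> shifted_diagram la" "y \<in> shifted_diagram la" "y \<le> x" for x y
    by (rule down[of "fst x" "snd x"]) (use that pos[of "fst y" "snd y"] pos[of "fst x" "snd x"] in
        \<open>simp_all add: less_eq_prod_def\<close>)
  show "mu = nu" if "is_strict_partition mu" "is_strict_partition nu" "shifted_diagram mu = shifted_diagram nu"
    for mu nu
    using shifted_diagram_inj that .
  show "order_ideal (shifted_diagram la) S \<longleftrightarrow> (\<exists>mu. is_strict_partition mu \<and> shifted_diagram mu = S)"
    if S: "S \<subseteq> shifted_diagram la" for S
  proof
    assume ideal: "order_ideal (shifted_diagram la) S"
    show "\<exists>mu. is_strict_partition mu \<and> shifted_diagram mu = S"
    proof (rule ex_strict_partition_shifted_diagram)
      show "finite S" using S finite_shifted_diagram by (rule finite_subset)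
      show "1 \<le> i \<and> i \<le> j" if "(i, j) \<in> S" for i j using that S pos by blast
      show "(i', j') \<in> S" if ij: "(i, j) \<in> S" "1 \<le> i'" "i' \<le> i" "i' \<le> j'" "j' \<le> j" for i j i' j'
      proof -
        have "(i', j') \<in> shifted_diagram la" by (rule down) (use ij S in auto)
        then show ?thesis using ideal ij unfolding order_ideal_def by (metis Pair_le)
      qed
    qed
  next
    assume "\<exists>mu. is_strict_partition mu \<and> shifted_diagram mu = S"
    then obtain mu where mu: "is_strict_partition mu" "shifted_diagram mu = S" by blast
    have "y \<in> S" if "x \<in> S" "y \<in> shifted_diagram la" "y \<le> x" for x y
    proof -
      have "(fst y, snd y) \<in> shifted_diagram mu"
        by (rule shifted_diagram_down_closed[OF mu(1), of "fst x" "snd x"])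
          (use that mu(2) pos[of "fst y" "snd y"] in \<open>simp_all add: less_eq_prod_def\<close>)
      then show ?thesis using mu(2) by simp
    qed
    then show "order_ideal (shifted_diagram la) S" using S by (simp add: order_ideal_def)
  qed
qed

lemma mem_rect_diagram_iff:
  "x \<in> diagram (rect m n) \<longleftrightarrow> 1 \<le> fst x \<and> fst x \<le> m \<and> 1 \<le> snd x \<and> snd x \<le> n"
  by (cases x) (auto simp: diagram_def rect_def)

lemma is_partition_rect: "1 \<le> n \<Longrightarrow> is_partition (rect m n)"
  by (simp add: is_partition_def rect_def sorted_wrt_iff_nth_less)

theorem rect_domino_pair_sum:
  assumes m: "1 \<le> m" and n: "1 \<le> n"
  shows "(\<Sum>(mu, nu) \<in> pairs_rect m n. f_syt mu * f_syt (rect_compl m n nu)) = (n - 1) * f_syt (rect m n)"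
proof -
  define D where "D = diagram (rect m n)"
  define \<rho> :: "nat \<times> nat \<Rightarrow> nat \<times> nat" where "\<rho> = (\<lambda>(i, j). (m - i + 1, n - j + 1))"
  note mem_D = mem_rect_diagram_iff[of _ m n, folded D_def]
  interpret reflected_shape D is_partition diagram \<rho>
    unfolding D_def
    by (intro reflected_shape.intro ideal_shape_diagram is_partition_rect n reflected_shape_axioms.intro)
      (auto simp: mem_rect_diagram_iff \<rho>_def less_eq_prod_def line_less_def split: prod.splits)
  have "card (hdominoes D) = card (std_fillings D) * (n - 1)"
  proof (rule card_hdominoes)
    show "D \<noteq> {}" using mem_D[of "(1, 1)"] m n by auto
    show "snd x = 1" if "x \<in> D" "\<forall>y\<in>D. \<not> line_less y x" for x
      using that mem_D[of "(fst x, snd x - 1)"] mem_D[of x] by (cases x) (auto simp: line_less_def)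
    show "snd x = n" if "x \<in> D" "\<forall>y\<in>D. \<not> line_less x y" for x
      using that mem_D[of "(fst x, Suc (snd x))"] mem_D[of x] by (cases x) (auto simp: line_less_def)
  qed (use n in simp)
  moreover have "pairs_rect m n = domino_pairs" "rect_compl m n = complement"
    unfolding domino_pairs_def complement_def shape_of_def
    by (simp_all add: pairs_rect_def D_def rect_compl_def \<rho>_def fun_eq_iff)
  ultimately show ?thesis
    using sum_domino_pairs_eq_card_hdominoes by (simp add: f_syt_eq_card D_def)
qed

lemma mem_staircase_shifted_diagram_iff:
  "x \<in> shifted_diagram (staircase n) \<longleftrightarrow> 1 \<le> fst x \<and> fst x \<le> snd x \<and> snd x \<le> n - 1"
proof -
  have "staircase n ! (i - 1) = n - i" if "1 \<le> i" "i \<le> n - 1" for i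
    using that by (simp add: staircase_def rev_nth)
  then show ?thesis
    by (cases x) (auto simp: mem_shifted_diagram_iff mem_diagram_iff staircase_def)
qed

lemma is_strict_partition_staircase: "is_strict_partition (staircase n)"
  by (auto simp: is_strict_partition_def staircase_def sorted_wrt_rev sorted_wrt_upt)

theorem staircase_domino_pair_sum:
  assumes n: "2 \<le> n"
  shows "(\<Sum>(mu, nu) \<in> pairs_stair n. g_syt mu * g_syt (stair_compl n nu)) = (n - 2) * g_syt (staircase n)"
proof -
  define D where "D = shifted_diagram (staircase n)"
  define \<rho> :: "nat \<times> nat \<Rightarrow> nat \<times> nat" where "\<rho> = (\<lambda>(i, j). (n - j, n - i))"
  note mem_D = mem_staircase_shifted_diagram_iff[of _ n, folded D_def]
  interpret reflected_shape D is_strict_partition shifted_diagram \<rho>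
    unfolding D_def
    by (intro reflected_shape.intro ideal_shape_shifted_diagram is_strict_partition_staircase
        reflected_shape_axioms.intro)
      (auto simp: mem_staircase_shifted_diagram_iff \<rho>_def less_eq_prod_def line_less_def split: prod.splits)
  have "card (hdominoes D) = card (std_fillings D) * (n - 1 - 1)"
  proof (rule card_hdominoes)
    show "D \<noteq> {}" using mem_D[of "(1, 1)"] n by auto
    show "snd x = 1" if x: "x \<in> D" "\<forall>y\<in>D. \<not> line_less y x" for x
    proof (rule ccontr)
      assume "snd x \<noteq> 1"
      then have "(fst x, snd x - 1) \<in> D \<and> line_less (fst x, snd x - 1) x \<or>
          (fst x - 1, snd x) \<in> D \<and> line_less (fst x - 1, snd x) x"
        using mem_D[of x] x(1) by (cases x) (auto simp: mem_D line_less_def)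
      then show False using x(2) by blast
    qed
    show "snd x = n - 1" if "x \<in> D" "\<forall>y\<in>D. \<not> line_less x y" for x
      using that mem_D[of "(fst x, Suc (snd x))"] mem_D[of x] by (cases x) (auto simp: line_less_def)
  qed (use n in simp)
  moreover have "pairs_stair n = domino_pairs" "stair_compl n = complement"
    unfolding domino_pairs_def complement_def shape_of_def
    by (simp_all add: pairs_stair_def D_def stair_compl_def \<rho>_def fun_eq_iff)
  ultimately show ?thesis
    using sum_domino_pairs_eq_card_hdominoes by (simp add: g_syt_eq_card D_def numeral_2_eq_2)
qed

theorem mainTheorem16:
  shows "(\<forall>m n :: nat. 1 \<le> m \<longrightarrow> 1 \<le> n \<longrightarrow>
            (\<Sum>(mu, nu) \<in> pairs_rect m n. f_syt mu * f_syt (rect_compl m n nu))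
              = (n - 1) * f_syt (rect m n))
       \<and> (\<forall>n :: nat. 2 \<le> n \<longrightarrow>
            (\<Sum>(mu, nu) \<in> pairs_stair n. g_syt mu * g_syt (stair_compl n nu))
              = (n - 2) * g_syt (staircase n))"
  using rect_domino_pair_sum staircase_domino_pair_sum by blast

end
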